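(* Let $G=K_{s}^{t}$ with $2\le t\le s$, $s+t=n$, and let $\tilde{G}=K^{n_{1},\ldots,n_{k}}_{n}$ with $k\ge2$, $n_i\ge1$, $\sum_{i=1}^k n_i+1=n$. Then $G$ and $\tilde{G}$ are not $D$-cospectral.
   Context: Two connected graphs are $D$-cospectral if their distance matrices have the same spectrum. $K_{s}^{t}$ denotes the graph on $s+t$ vertices obtained from the complete graph $K_s$ by attaching a pendant edge (a new vertex of degree 1) to each of $t$ distinct vertices of $K_s$. $K^{n_{1},\ldots,n_{k}}_{n}$ denotes the graph on $n$ vertices having a vertex $v$ of degree $n-1$ such that $G-v$ is the disjoint union of complete graphs $K_{n_1},\dots,K_{n_k}$. *)

theory Defs
  imports Main "Jordan_Normal_Form.Char_Poly" "HOL-Computational_Algebra.Polynomial"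
begin

text \<open>A simple graph on vertex set {0..<n} is given by a symmetric irreflexive
  adjacency predicate adj.\<close>

definition is_walk :: "(nat \<Rightarrow> nat \<Rightarrow> bool) \<Rightarrow> nat \<Rightarrow> nat list \<Rightarrow> bool" where
  "is_walk adj n p \<longleftrightarrow> p \<noteq> [] \<and> set p \<subseteq> {0..<n} \<and>
     (\<forall>i. Suc i < length p \<longrightarrow> adj (p ! i) (p ! Suc i))"

definition graph_dist :: "(nat \<Rightarrow> nat \<Rightarrow> bool) \<Rightarrow> nat \<Rightarrow> nat \<Rightarrow> nat \<Rightarrow> nat" where
  "graph_dist adj n u v = (LEAST k. \<exists>p. is_walk adj n p \<and> hd p = u \<and> last p = v \<and> length p = Suc k)"

definition connected_graph :: "(nat \<Rightarrow> nat \<Rightarrow> bool) \<Rightarrow> nat \<Rightarrow> bool" where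
  "connected_graph adj n \<longleftrightarrow> (\<forall>u<n. \<forall>v<n. \<exists>p. is_walk adj n p \<and> hd p = u \<and> last p = v)"

definition dist_matrix :: "(nat \<Rightarrow> nat \<Rightarrow> bool) \<Rightarrow> nat \<Rightarrow> real mat" where
  "dist_matrix adj n = mat n n (\<lambda>(i, j). real (graph_dist adj n i j))"

definition spectrum_mult :: "real mat \<Rightarrow> complex \<Rightarrow> nat" where
  "spectrum_mult A z = order z (char_poly (map_mat complex_of_real A))"

definition D_cospectral :: "(nat \<Rightarrow> nat \<Rightarrow> bool) \<Rightarrow> nat \<Rightarrow> (nat \<Rightarrow> nat \<Rightarrow> bool) \<Rightarrow> nat \<Rightarrow> bool" where
  "D_cospectral adj1 n1 adj2 n2 \<longleftrightarrow> n1 = n2 \<and> spectrum_mult (dist_matrix adj1 n1) = spectrum_mult (dist_matrix adj2 n2)"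

text \<open>K_s^t on vertices {0..<s+t}: 0..<s form a clique, vertex s+i is pendant at i (i<t).\<close>

definition K_pend :: "nat \<Rightarrow> nat \<Rightarrow> nat \<Rightarrow> nat \<Rightarrow> bool" where
  "K_pend s t u v \<longleftrightarrow>
     (u < s \<and> v < s \<and> u \<noteq> v) \<or>
     (u < t \<and> v = s + u) \<or> (v < t \<and> u = s + v)"

text \<open>K_n^{n_1,...,n_k} with ns = [n_1,...,n_k]: vertex 0 is the dominating vertex;
  vertex v \<ge> 1 lies in block j iff sum of the first j block sizes \<le> v - 1 < sum of the
  first j+1 block sizes; each block is a clique.\<close>

definition in_block :: "nat list \<Rightarrow> nat \<Rightarrow> nat \<Rightarrow> bool" where
  "in_block ns j v \<longleftrightarrow> j < length ns \<and> 1 \<le> v \<and>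
     sum_list (take j ns) \<le> v - 1 \<and> v - 1 < sum_list (take (Suc j) ns)"

definition K_cone :: "nat list \<Rightarrow> nat \<Rightarrow> nat \<Rightarrow> bool" where
  "K_cone ns u v \<longleftrightarrow> u \<noteq> v \<and>
     (u = 0 \<or> v = 0 \<or> (\<exists>j. in_block ns j u \<and> in_block ns j v))"

end

theory Submission
  imports Defs
begin

text \<open>For t < s the distance matrix of K_s^t has two eigenvalues in (-1, -1/2): sqrt 2 - 2,
  with an eigenvector supported on two clique vertices and their pendants, and a root in
  (-1, -3/5) of the characteristic polynomial of the quotient matrix of its three-class
  equitable partition. An eigenvalue \<lambda> > -1 of the distance matrix of K_n^{n_1,...,n_k},
  however, satisfies \<lambda> = (1 + 2\<lambda>) \<Sum>_v 1 / (\<lambda> + 1 + |B(v)|), where B(v) is the block of v,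
  and this equation has at most one root in (-1, -1/2). For t = s, two twin vertices of the
  cone graph give it the eigenvalue -1 or -2, neither of which is an eigenvalue of K_t^t.\<close>

lemma is_walk_nonempty: "is_walk adj n p \<Longrightarrow> p \<noteq> []"
  by (simp add: is_walk_def)

lemma is_walk_length_2:
  assumes "is_walk adj n p" "length p = 2"
  shows "adj (hd p) (last p)"
proof -
  obtain a b where "p = [a, b]"
    using assms(2) by (metis One_nat_def Suc_1 length_0_conv length_Suc_conv)
  then show ?thesis using assms(1) by (auto simp: is_walk_def dest: spec[of _ 0])
qed

lemma is_walk_length_3:
  assumes "is_walk adj n p" "length p = 3"
  shows "\<exists>w<n. adj (hd p) w \<and> adj w (last p)"
proof -
  obtain a b c where p: "p = [a, b, c]"
    using assms(2) by (metis length_0_conv length_Suc_conv numeral_3_eq_3)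
  have "adj a b" "adj b c" "b < n"
    using assms(1) unfolding p is_walk_def by (auto dest: spec[of _ 0] spec[of _ 1])
  then show ?thesis unfolding p by auto
qed

lemma graph_dist_eqI:
  assumes "is_walk adj n p" "hd p = u" "last p = v" "length p = Suc k"
    and "\<And>q. is_walk adj n q \<Longrightarrow> hd q = u \<Longrightarrow> last q = v \<Longrightarrow> Suc k \<le> length q"
  shows "graph_dist adj n u v = k"
  unfolding graph_dist_def
proof (rule Least_equality)
  show "\<exists>p. is_walk adj n p \<and> hd p = u \<and> last p = v \<and> length p = Suc k"
    using assms by blast
next
  fix k' assume "\<exists>q. is_walk adj n q \<and> hd q = u \<and> last q = v \<and> length q = Suc k'"
  then show "k \<le> k'" using assms(5) by force
qed

lemma graph_dist_self: "u < n \<Longrightarrow> graph_dist adj n u u = 0"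
  by (rule graph_dist_eqI[of _ _ "[u]"])
     (auto simp: is_walk_def Suc_le_eq dest: is_walk_nonempty)

lemma graph_dist_adjacent:
  assumes "u < n" "v < n" "u \<noteq> v" "adj u v"
  shows "graph_dist adj n u v = 1"
proof (rule graph_dist_eqI[of _ _ "[u, v]"])
  fix q assume q: "is_walk adj n q" "hd q = u" "last q = v"
  then have "length q \<noteq> 0" "length q \<noteq> 1"
    using assms(3) by (auto dest: is_walk_nonempty simp: length_Suc_conv)
  then show "Suc 1 \<le> length q" by linarith
qed (use assms in \<open>auto simp: is_walk_def less_Suc_eq\<close>)

lemma graph_dist_eq_2:
  assumes "u < n" "v < n" "w < n" "u \<noteq> v" "\<not> adj u v" "adj u w" "adj w v"
  shows "graph_dist adj n u v = 2"
proof (rule graph_dist_eqI[of _ _ "[u, w, v]"])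
  fix q assume q: "is_walk adj n q" "hd q = u" "last q = v"
  then have "length q \<noteq> 0" "length q \<noteq> 1" "length q \<noteq> 2"
    using assms(4,5) is_walk_length_2[OF q(1)]
    by (auto dest: is_walk_nonempty simp: length_Suc_conv)
  then show "Suc 2 \<le> length q" by linarith
qed (use assms in \<open>auto simp: is_walk_def less_Suc_eq nth_Cons split: nat.splits\<close>)

lemma graph_dist_eq_3:
  assumes "u < n" "v < n" "w < n" "w' < n" "u \<noteq> v" "\<not> adj u v"
    and "\<And>x. x < n \<Longrightarrow> adj u x \<Longrightarrow> adj x v \<Longrightarrow> False"
    and "adj u w" "adj w w'" "adj w' v"
  shows "graph_dist adj n u v = 3"
proof (rule graph_dist_eqI[of _ _ "[u, w, w', v]"])
  fix q assume q: "is_walk adj n q" "hd q = u" "last q = v"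
  then have "length q \<noteq> 0" "length q \<noteq> 1" "length q \<noteq> 2" "length q \<noteq> 3"
    using assms(5-7) is_walk_length_2[OF q(1)] is_walk_length_3[OF q(1)]
    by (auto dest: is_walk_nonempty simp: length_Suc_conv)
  then show "Suc 3 \<le> length q" by linarith
qed (use assms in \<open>auto simp: is_walk_def less_Suc_eq nth_Cons split: nat.splits\<close>)

lemma spectrum_mult_pos_iff_eigenvalue:
  assumes "A \<in> carrier_mat n n"
  shows "0 < spectrum_mult A z \<longleftrightarrow> eigenvalue (map_mat complex_of_real A) z"
proof -
  have M: "map_mat complex_of_real A \<in> carrier_mat n n" using assms by simp
  then have "char_poly (map_mat complex_of_real A) \<noteq> 0"
    using degree_monic_char_poly[OF M] by auto
  then show ?thesis
    unfolding spectrum_mult_def by (simp add: order_gt_0_iff eigenvalue_root_char_poly[OF M])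
qed

lemma eigenvalue_iff_eigenfunction:
  fixes M :: "'a::field mat"
  assumes "M \<in> carrier_mat n n"
  shows "eigenvalue M z \<longleftrightarrow>
    (\<exists>x. (\<exists>i<n. x i \<noteq> 0) \<and> (\<forall>i<n. (\<Sum>j<n. M $$ (i, j) * x j) = z * x i))"
    (is "_ \<longleftrightarrow> ?eigenfunction")
proof -
  let ?eigenvector = "\<lambda>v. v \<in> carrier_vec n \<and> v \<noteq> 0\<^sub>v n \<and> (\<forall>i<n. (M *\<^sub>v v) $ i = z * v $ i)"
  have row: "(M *\<^sub>v v) $ i = (\<Sum>j<n. M $$ (i, j) * v $ j)" if "v \<in> carrier_vec n" "i < n" for v i
    using that assms by (auto simp: mult_mat_vec_def scalar_prod_def atLeast0LessThan intro!: sum.cong)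
  have "M *\<^sub>v v = z \<cdot>\<^sub>v v \<longleftrightarrow> (\<forall>i<n. (M *\<^sub>v v) $ i = z * v $ i)" if "v \<in> carrier_vec n" for v
    using that assms by (auto simp: vec_eq_iff)
  then have "eigenvalue M z \<longleftrightarrow> (\<exists>v. ?eigenvector v)"
    unfolding eigenvalue_def eigenvector_def using assms by auto
  also have "\<dots> \<longleftrightarrow> ?eigenfunction"
  proof
    assume "\<exists>v. ?eigenvector v"
    then obtain v where "?eigenvector v" by blast
    then show ?eigenfunction
      by (intro exI[of _ "\<lambda>j. v $ j"]) (auto simp: row vec_eq_iff)
  next
    assume ?eigenfunction
    then obtain x where "\<exists>i<n. x i \<noteq> 0" "\<forall>i<n. (\<Sum>j<n. M $$ (i, j) * x j) = z * x i"
      by blast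
    then show "\<exists>v. ?eigenvector v"
      by (intro exI[of _ "vec n x"]) (auto simp: row vec_eq_iff intro: sum.cong)
  qed
  finally show ?thesis .
qed

lemma spectrum_mult_dist_matrix_pos_iff:
  "0 < spectrum_mult (dist_matrix adj n) z \<longleftrightarrow>
     (\<exists>x :: nat \<Rightarrow> complex. (\<exists>i<n. x i \<noteq> 0) \<and>
        (\<forall>i<n. (\<Sum>j<n. of_nat (graph_dist adj n i j) * x j) = z * x i))"
proof -
  have "dist_matrix adj n \<in> carrier_mat n n" by (simp add: dist_matrix_def)
  moreover have "(\<Sum>j<n. map_mat complex_of_real (dist_matrix adj n) $$ (i, j) * x j)
      = (\<Sum>j<n. of_nat (graph_dist adj n i j) * x j)" if "i < n" for i and x :: "nat \<Rightarrow> complex"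
    using that by (intro sum.cong) (auto simp: dist_matrix_def)
  ultimately show ?thesis
    by (simp add: spectrum_mult_pos_iff_eigenvalue eigenvalue_iff_eigenfunction[where n = n])
qed

lemma spectrum_mult_dist_matrix_pos_real:
  fixes f :: "nat \<Rightarrow> real"
  assumes "\<forall>i<n. (\<Sum>j<n. real (graph_dist adj n i j) * f j) = lam * f i"
    and "k < n" "f k \<noteq> 0"
  shows "0 < spectrum_mult (dist_matrix adj n) (of_real lam)"
proof -
  have "(\<Sum>j<n. of_nat (graph_dist adj n i j) * complex_of_real (f j))
      = of_real lam * of_real (f i)" if "i < n" for i
  proof -
    have "(\<Sum>j<n. of_nat (graph_dist adj n i j) * complex_of_real (f j))
        = of_real (\<Sum>j<n. real (graph_dist adj n i j) * f j)" by simp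
    then show ?thesis using assms(1) that by simp
  qed
  then show ?thesis
    using assms(2,3) unfolding spectrum_mult_dist_matrix_pos_iff
    by (intro exI[of _ "\<lambda>j. of_real (f j)"]) auto
qed

lemma dist_matrix_twin_eigenvalue:
  assumes "u < n" "v < n" "u \<noteq> v"
    and "graph_dist adj n v u = graph_dist adj n u v"
    and "\<And>w. w < n \<Longrightarrow> w \<noteq> u \<Longrightarrow> w \<noteq> v \<Longrightarrow> graph_dist adj n w u = graph_dist adj n w v"
  shows "0 < spectrum_mult (dist_matrix adj n) (- of_nat (graph_dist adj n u v))"
proof -
  define f :: "nat \<Rightarrow> real" where "f j = (if j = u then 1 else if j = v then -1 else 0)" for j
  have "(\<Sum>j<n. real (graph_dist adj n i j) * f j) = - real (graph_dist adj n u v) * f i"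
    if "i < n" for i
  proof -
    have "(\<Sum>j<n. real (graph_dist adj n i j) * f j)
        = (\<Sum>j<n. (if j = u then real (graph_dist adj n i u) else 0)
                 - (if j = v then real (graph_dist adj n i v) else 0))"
      unfolding f_def using assms(3) by (intro sum.cong) auto
    also have "\<dots> = real (graph_dist adj n i u) - real (graph_dist adj n i v)"
      using assms(1,2) by (simp add: sum_subtractf)
    finally show ?thesis
      using assms(3,4) assms(5)[of i] that graph_dist_self[of u n adj] graph_dist_self[of v n adj] assms(1,2)
      by (auto simp: f_def)
  qed
  then have "0 < spectrum_mult (dist_matrix adj n) (of_real (- real (graph_dist adj n u v)))"
    using assms(1,3) by (intro spectrum_mult_dist_matrix_pos_real[where k = u and f = f]) (simp_all add: f_def)
  then show ?thesis by simp
qed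

lemma sum_if_eq_mult:
  fixes p q :: "'a::comm_ring_1"
  assumes "finite A"
  shows "(\<Sum>j\<in>A. (if j = c then p else q) * g j) = q * (\<Sum>j\<in>A. g j) + (if c \<in> A then (p - q) * g c else 0)"
proof -
  have "(\<Sum>j\<in>A. (if j = c then p else q) * g j) = (\<Sum>j\<in>A. q * g j + (if j = c then (p - q) * g j else 0))"
    by (intro sum.cong) (auto simp: algebra_simps)
  then show ?thesis using assms by (simp add: sum.distrib sum_distrib_left sum.delta)
qed

lemma sum_lessThan_split3:
  fixes g :: "nat \<Rightarrow> 'a::comm_monoid_add"
  assumes "t \<le> s"
  shows "(\<Sum>j<s+t. g j) = (\<Sum>j\<in>{0..<t}. g j) + (\<Sum>j\<in>{t..<s}. g j) + (\<Sum>j\<in>{s..<s+t}. g j)"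
proof -
  have "(\<Sum>j<s+t. g j) = (\<Sum>j\<in>{0..<s}. g j) + (\<Sum>j\<in>{s..<s+t}. g j)"
    using sum.atLeastLessThan_concat[of 0 s "s + t" g] by (simp add: atLeast0LessThan)
  moreover have "(\<Sum>j\<in>{0..<s}. g j) = (\<Sum>j\<in>{0..<t}. g j) + (\<Sum>j\<in>{t..<s}. g j)"
    using assms by (intro sum.atLeastLessThan_concat[symmetric]) auto
  ultimately show ?thesis by simp
qed

text \<open>Distances in K_s^t: every vertex has an anchor in the clique (itself, or the clique
  vertex its pendant edge hangs from), and a shortest path uses one clique edge between distinct
  anchors plus one edge for each pendant endpoint.\<close>

definition clique_anchor :: "nat \<Rightarrow> nat \<Rightarrow> nat" where
  "clique_anchor s v = (if v < s then v else v - s)"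

definition K_pend_dist :: "nat \<Rightarrow> nat \<Rightarrow> nat \<Rightarrow> nat" where
  "K_pend_dist s u v = (if u = v then 0 else
     (if clique_anchor s u = clique_anchor s v then 0 else 1)
     + (if s \<le> u then 1 else 0) + (if s \<le> v then 1 else 0))"

lemma K_pend_pendant_vertex:
  fixes s t v :: nat
  assumes "s \<le> v" "v < s + t"
  obtains i where "v = s + i" "i < t"
  using assms by (intro that[of "v - s"]) auto

lemma graph_dist_K_pend:
  assumes "t \<le> s" "u < s + t" "v < s + t"
  shows "graph_dist (K_pend s t) (s + t) u v = K_pend_dist s u v"
proof -
  consider "u = v" | "u \<noteq> v" "K_pend s t u v" | "u \<noteq> v" "\<not> K_pend s t u v" "u < s \<or> v < s"
    | "s \<le> u" "s \<le> v" "u \<noteq> v" by linarith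
  then show ?thesis
  proof cases
    case 1
    then show ?thesis using assms graph_dist_self by (simp add: K_pend_dist_def)
  next
    case 2
    then have "graph_dist (K_pend s t) (s + t) u v = 1"
      using assms by (intro graph_dist_adjacent) auto
    moreover have "K_pend_dist s u v = 1"
      using 2 assms(1) unfolding K_pend_def by (auto simp: K_pend_dist_def clique_anchor_def)
    ultimately show ?thesis by simp
  next
    case 3
    have "graph_dist (K_pend s t) (s + t) u v = 2"
      by (rule graph_dist_eq_2[where w = "if u < s then v - s else u - s"])
         (use assms 3 in \<open>auto simp: K_pend_def\<close>)
    moreover have "K_pend_dist s u v = 2"
      using 3 assms unfolding K_pend_def by (cases "u < s") (simp_all add: K_pend_dist_def clique_anchor_def, arith+)
    ultimately show ?thesis by simp
  next
    case 4
    obtain i where i: "u = s + i" "i < t" using 4 assms K_pend_pendant_vertex by blast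
    obtain j where j: "v = s + j" "j < t" using 4 assms K_pend_pendant_vertex by blast
    have "graph_dist (K_pend s t) (s + t) u v = 3"
    proof (rule graph_dist_eq_3[where w = i and w' = j])
      fix w assume "w < s + t" "K_pend s t u w" "K_pend s t w v"
      then show False using 4 i j assms by (auto simp: K_pend_def)
    qed (use assms 4 i j in \<open>auto simp: K_pend_def\<close>)
    then show ?thesis using 4 i j by (simp add: K_pend_dist_def clique_anchor_def)
  qed
qed

lemma K_pend_dist_row_classes:
  fixes a b c :: real
  assumes "t \<le> s" "i < s + t"
  shows "(\<Sum>j<s+t. real (K_pend_dist s i j) * (if j < t then a else if j < s then b else c)) =
    (if i < t then (real t - 1) * a + (real s - real t) * b + (2 * real t - 1) * c
     else if i < s then real t * a + (real s - real t - 1) * b + 2 * real t * c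
     else (2 * real t - 1) * a + 2 * (real s - real t) * b + 3 * (real t - 1) * c)"
proof -
  let ?r = "clique_anchor s i" and ?p = "if s \<le> i then 1 else 0 :: real"
  have clique: "real (K_pend_dist s i j) = (if j = ?r then ?p else 1 + ?p)" if "j < s" for j
    using that assms by (auto simp: K_pend_dist_def clique_anchor_def)
  have pendant: "real (K_pend_dist s i j) = (if j = s + ?r then 1 - ?p else 2 + ?p)"
    if "s \<le> j" "j < s + t" for j
    using that assms by (auto simp: K_pend_dist_def clique_anchor_def)
  have "(\<Sum>j<s+t. real (K_pend_dist s i j) * (if j < t then a else if j < s then b else c))
      = (\<Sum>j\<in>{0..<t}. (if j = ?r then ?p else 1 + ?p) * a)
      + (\<Sum>j\<in>{t..<s}. (if j = ?r then ?p else 1 + ?p) * b)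
      + (\<Sum>j\<in>{s..<s+t}. (if j = s + ?r then 1 - ?p else 2 + ?p) * c)"
    unfolding sum_lessThan_split3[OF assms(1)]
    using assms(1) by (intro arg_cong2[where f = "(+)"] sum.cong) (auto simp: clique pendant)
  also have "\<dots> = (if i < t then (real t - 1) * a + (real s - real t) * b + (2 * real t - 1) * c
     else if i < s then real t * a + (real s - real t - 1) * b + 2 * real t * c
     else (2 * real t - 1) * a + 2 * (real s - real t) * b + 3 * (real t - 1) * c)"
    unfolding sum_if_eq_mult[OF finite_atLeastLessThan]
    using assms by (cases "i < t"; cases "i < s") (auto simp: clique_anchor_def of_nat_diff algebra_simps)
  finally show ?thesis .
qed

lemma K_pend_eigenvalue_sqrt2:
  assumes "2 \<le> t" "t \<le> s"
  shows "0 < spectrum_mult (dist_matrix (K_pend s t) (s + t)) (of_real (sqrt 2 - 2))"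
proof -
  define a :: real where "a = 1 - sqrt 2"
  define f :: "nat \<Rightarrow> real" where
    "f j = (if j = 0 then 1 else 0) - (if j = 1 then 1 else 0)
         + (if j = s then a else 0) - (if j = s + 1 then a else 0)" for j
  have "(\<Sum>j<s+t. real (K_pend_dist s i j) * f j) = (sqrt 2 - 2) * f i" if "i < s + t" for i
  proof -
    have "(\<Sum>j<s+t. real (K_pend_dist s i j) * f j)
        = real (K_pend_dist s i 0) - real (K_pend_dist s i 1)
          + a * real (K_pend_dist s i s) - a * real (K_pend_dist s i (s + 1))"
      using assms by (simp add: f_def algebra_simps sum.distrib sum_subtractf sum.delta
                                if_distrib[where f = "\<lambda>x. _ * x"] cong: if_cong)
    also have "\<dots> = (sqrt 2 - 2) * f i"
    proof -
      have sqrt2: "sqrt 2 * sqrt 2 = (2::real)" by simp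
      consider "i = 0" | "i = 1" | "i = s" | "i = s + 1" | "1 < i" "i < s" | "s + 1 < i"
        using assms that by linarith
      then show ?thesis
        using assms sqrt2 by cases (auto simp: K_pend_dist_def clique_anchor_def f_def a_def algebra_simps)
    qed
    finally show ?thesis .
  qed
  then show ?thesis
    using assms graph_dist_K_pend
    by (intro spectrum_mult_dist_matrix_pos_real[where k = 0 and f = f]) (simp_all add: f_def)
qed

text \<open>Vertices of K_s^t fall into three classes: clique vertices carrying a pendant, the other
  clique vertices, and pendant vertices; K_pend_dist_row_classes gives the quotient matrix Q.
  The vector (A \<mu>, B \<mu>, C \<mu>) annihilates the first and third rows of Q - \<mu> I, and the
  middle row then reads R \<mu> = 0.\<close>

lemma K_pend_eigenvalue_between:
  assumes "1 \<le> t" "t < s"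
  obtains mu where "-1 < mu" "mu < -3/5"
    "0 < spectrum_mult (dist_matrix (K_pend s t) (s + t)) (of_real mu)"
proof -
  define S T where "S = real s" and "T = real t"
  have ST: "1 \<le> S - T" "1 \<le> T" using assms unfolding S_def T_def by auto
  define A where "A mu = (S - T) * (T + 1 + mu)" for mu :: real
  define B where "B mu = -(2*T - 1) * (1 + 2*mu) - (T - 1 - mu) * (T + 1 + mu)" for mu :: real
  define C where "C mu = (1 + 2*mu) * (S - T)" for mu :: real
  define R where "R mu = T * A mu + (S - T - 1 - mu) * B mu + 2 * T * C mu" for mu :: real
  have "R (-1) < 0"
    using ST unfolding R_def A_def B_def C_def by (simp add: algebra_simps)
  moreover have "0 < R (-3/5)"
  proof -
    have "R (-3/5) = (S - T) * (2*T/5 - 1/25) + 2/5 * (T - 1/5)^2"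
      unfolding R_def A_def B_def C_def power2_eq_square by (simp add: field_simps)
    moreover have "0 < (S - T) * (2*T/5 - 1/25)" using ST by (intro mult_pos_pos) auto
    moreover have "0 \<le> 2/5 * (T - 1/5)^2" by simp
    ultimately show ?thesis by linarith
  qed
  moreover have "continuous_on {-1..-3/5} R"
    unfolding R_def A_def B_def C_def by (intro continuous_intros)
  ultimately obtain mu where "-1 \<le> mu" "mu \<le> -3/5" "R mu = 0"
    using IVT'[of R "-1" 0 "-3/5"] by force
  with \<open>R (-1) < 0\<close> \<open>0 < R (-3/5)\<close> have mu: "-1 < mu" "mu < -3/5" "R mu = 0"
    by (auto simp: order.order_iff_strict)
  define f where "f j = (if j < t then A mu else if j < s then B mu else C mu)" for j
  have "(\<Sum>j<s+t. real (K_pend_dist s i j) * f j) = mu * f i" if "i < s + t" for i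
    using assms that mu(3) unfolding f_def K_pend_dist_row_classes[OF less_imp_le[OF assms(2)] that]
    by (simp add: R_def A_def B_def C_def S_def T_def algebra_simps)
  moreover have "f s \<noteq> 0"
    using assms mu ST unfolding f_def C_def by simp
  ultimately have "0 < spectrum_mult (dist_matrix (K_pend s t) (s + t)) (of_real mu)"
    using assms graph_dist_K_pend[of t s]
    by (intro spectrum_mult_dist_matrix_pos_real[where k = s and f = f]) simp_all
  with mu show thesis using that by blast
qed

lemma K_pend_square_rows:
  fixes x :: "nat \<Rightarrow> 'a::comm_ring_1"
  assumes "i < t"
  defines "Y \<equiv> \<Sum>j\<in>{0..<t}. x j" and "Z \<equiv> \<Sum>j\<in>{t..<t+t}. x j"
  shows "(\<Sum>j<t+t. of_nat (K_pend_dist t i j) * x j) = Y - x i + 2 * Z - x (t + i)"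
    and "(\<Sum>j<t+t. of_nat (K_pend_dist t (t + i) j) * x j) = 2 * Y - x i + 3 * Z - 3 * x (t + i)"
proof -
  have "(\<Sum>j<t+t. of_nat (K_pend_dist t i j) * x j)
      = (\<Sum>j\<in>{0..<t}. (if j = i then 0 else 1) * x j) + (\<Sum>j\<in>{t..<t+t}. (if j = t + i then 1 else 2) * x j)"
    unfolding sum_lessThan_split3[OF order_refl] using assms
    by (simp, intro arg_cong2[where f = "(+)"] sum.cong) (auto simp: K_pend_dist_def clique_anchor_def)
  then show "(\<Sum>j<t+t. of_nat (K_pend_dist t i j) * x j) = Y - x i + 2 * Z - x (t + i)"
    unfolding sum_if_eq_mult[OF finite_atLeastLessThan] using assms by (simp add: algebra_simps)
  have "(\<Sum>j<t+t. of_nat (K_pend_dist t (t + i) j) * x j)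
      = (\<Sum>j\<in>{0..<t}. (if j = i then 1 else 2) * x j) + (\<Sum>j\<in>{t..<t+t}. (if j = t + i then 0 else 3) * x j)"
    unfolding sum_lessThan_split3[OF order_refl] using assms
    by (simp, intro arg_cong2[where f = "(+)"] sum.cong) (auto simp: K_pend_dist_def clique_anchor_def)
  then show "(\<Sum>j<t+t. of_nat (K_pend_dist t (t + i) j) * x j) = 2 * Y - x i + 3 * Z - 3 * x (t + i)"
    unfolding sum_if_eq_mult[OF finite_atLeastLessThan] using assms by (simp add: algebra_simps)
qed

lemma linear_2x2_trivial_solution:
  fixes a b c d p q :: "'a::idom"
  assumes "a * p + b * q = 0" "c * p + d * q = 0" "a * d - b * c \<noteq> 0"
  shows "p = 0" "q = 0"
proof -
  have "(a * d - b * c) * p = d * (a * p + b * q) - b * (c * p + d * q)"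
    by (simp add: algebra_simps)
  then show "p = 0" using assms by simp
  have "(a * d - b * c) * q = a * (c * p + d * q) - c * (a * p + b * q)"
    by (simp add: algebra_simps)
  then show "q = 0" using assms by simp
qed

lemma nat_square_plus_2_neq_6_times: "(t::nat) * t + 2 \<noteq> 6 * t"
proof (cases "t \<le> 6")
  case True
  then have "t = 0 \<or> t = 1 \<or> t = 2 \<or> t = 3 \<or> t = 4 \<or> t = 5 \<or> t = 6" by linarith
  then show ?thesis by auto
next
  case False
  then have "7 * t \<le> t * t" by simp
  then show ?thesis by linarith
qed

text \<open>The rows of a clique vertex i and of its pendant t + i form a 2 x 2 system in x i and
  x (t + i) whose right-hand side only involves the class sums; so x is constant on both classes,
  and the class sums then satisfy a second 2 x 2 system.\<close>

lemma K_pend_square_eigenvector_zero: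
  fixes x :: "nat \<Rightarrow> 'a::field_char_0"
  assumes eigen: "\<And>i. i < t + t \<Longrightarrow> (\<Sum>j<t+t. of_nat (K_pend_dist t i j) * x j) = z * x i"
    and det1: "(z + 1) * (z + 3) - 1 * 1 \<noteq> 0"
    and det2: "(z + 1 - of_nat t) * (z + 3 - 3 * of_nat t) - (1 - 2 * of_nat t) * (1 - 2 * of_nat t) \<noteq> 0"
    and "k < t + t"
  shows "x k = 0"
proof -
  define Y Z where "Y = (\<Sum>j\<in>{0..<t}. x j)" and "Z = (\<Sum>j\<in>{t..<t+t}. x j)"
  have rows: "(z + 1) * x i + x (t + i) = Y + 2 * Z" "x i + (z + 3) * x (t + i) = 2 * Y + 3 * Z"
    if "i < t" for i
  proof -
    have "z * x i = Y - x i + 2 * Z - x (t + i)" "z * x (t + i) = 2 * Y - x i + 3 * Z - 3 * x (t + i)"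
      using K_pend_square_rows[OF that, of x] eigen[of i] eigen[of "t + i"] that
      unfolding Y_def Z_def by simp_all
    then show "(z + 1) * x i + x (t + i) = Y + 2 * Z" "x i + (z + 3) * x (t + i) = 2 * Y + 3 * Z"
      by (simp_all add: algebra_simps)
  qed
  have "0 < t" using \<open>k < t + t\<close> by simp
  have clique_const: "x i = x 0" and pendant_const: "x (t + i) = x t" if "i < t" for i
  proof -
    have "(z + 1) * (x i - x 0) + 1 * (x (t + i) - x t) = 0"
      and "1 * (x i - x 0) + (z + 3) * (x (t + i) - x t) = 0"
      using rows[OF that] rows[OF \<open>0 < t\<close>] by (simp_all add: algebra_simps)
    from linear_2x2_trivial_solution[OF this det1]
    show "x i = x 0" "x (t + i) = x t" by simp_all
  qed
  have "Y = (\<Sum>j\<in>{0..<t}. x 0)"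
    unfolding Y_def by (intro sum.cong refl) (metis atLeastLessThan_iff clique_const)
  moreover have "Z = (\<Sum>j\<in>{t..<t+t}. x t)"
    unfolding Z_def
  proof (intro sum.cong refl)
    fix j assume "j \<in> {t..<t+t}"
    then have "j - t < t" "t + (j - t) = j" by auto
    then show "x j = x t" using pendant_const[of "j - t"] by simp
  qed
  ultimately have "Y = of_nat t * x 0" "Z = of_nat t * x t" by simp_all
  then have "(z + 1 - of_nat t) * x 0 + (1 - 2 * of_nat t) * x t = 0"
    and "(1 - 2 * of_nat t) * x 0 + (z + 3 - 3 * of_nat t) * x t = 0"
    using rows[OF \<open>0 < t\<close>] by (simp_all add: algebra_simps)
  from linear_2x2_trivial_solution[OF this det2] have "x 0 = 0" "x t = 0" .
  show ?thesis
  proof (cases "k < t")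
    case True
    then show ?thesis using clique_const[of k] \<open>x 0 = 0\<close> by simp
  next
    case False
    then show ?thesis using pendant_const[of "k - t"] \<open>x t = 0\<close> \<open>k < t + t\<close> by simp
  qed
qed

lemma K_pend_square_determinants:
  fixes z :: "'a::field_char_0"
  assumes "2 \<le> t" "z = -1 \<or> z = -2"
  shows "(z + 1) * (z + 3) - 1 * 1 \<noteq> 0"
    and "(z + 1 - of_nat t) * (z + 3 - 3 * of_nat t) - (1 - 2 * of_nat t) * (1 - 2 * of_nat t) \<noteq> 0"
proof -
  show "(z + 1) * (z + 3) - 1 * 1 \<noteq> 0" using assms(2) by auto
  define T :: 'a where "T = of_nat t"
  from assms(2) consider "z = -1" | "z = -2" by blast
  then have "(z + 1 - T) * (z + 3 - 3 * T) - (1 - 2 * T) * (1 - 2 * T) \<noteq> 0"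
  proof cases
    case 1
    have "T \<noteq> 1" using assms(1) unfolding T_def by (simp add: of_nat_eq_1_iff)
    moreover have "(z + 1 - T) * (z + 3 - 3 * T) - (1 - 2 * T) * (1 - 2 * T) = - ((T - 1) * (T - 1))"
      using 1 by (simp add: algebra_simps)
    ultimately show ?thesis by simp
  next
    case 2
    have "of_nat (t * t + 2) \<noteq> (of_nat (6 * t) :: 'a)"
      unfolding of_nat_eq_iff by (rule nat_square_plus_2_neq_6_times)
    then have "T * T + 2 - 6 * T \<noteq> 0" unfolding T_def by (simp add: add.commute)
    moreover have "(z + 1 - T) * (z + 3 - 3 * T) - (1 - 2 * T) * (1 - 2 * T) = - (T * T + 2 - 6 * T)"
      using 2 by (simp add: algebra_simps)
    ultimately show ?thesis by simp
  qed
  then show "(z + 1 - of_nat t) * (z + 3 - 3 * of_nat t) - (1 - 2 * of_nat t) * (1 - 2 * of_nat t) \<noteq> 0"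
    unfolding T_def .
qed

lemma K_pend_square_no_eigenvalue:
  assumes "2 \<le> t" "z = -1 \<or> z = -2"
  shows "spectrum_mult (dist_matrix (K_pend t t) (t + t)) z = 0"
proof (rule ccontr)
  assume "spectrum_mult (dist_matrix (K_pend t t) (t + t)) z \<noteq> 0"
  then have "0 < spectrum_mult (dist_matrix (K_pend t t) (t + t)) z" by simp
  then obtain x k where "k < t + t" "x k \<noteq> 0"
    and eigen: "\<forall>i<t+t. (\<Sum>j<t+t. of_nat (graph_dist (K_pend t t) (t + t) i j) * x j) = z * x i"
    unfolding spectrum_mult_dist_matrix_pos_iff by blast
  have "(\<Sum>j<t+t. of_nat (K_pend_dist t i j) * x j) = z * x i" if "i < t + t" for i
  proof -
    have "(\<Sum>j<t+t. of_nat (K_pend_dist t i j) * x j)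
        = (\<Sum>j<t+t. of_nat (graph_dist (K_pend t t) (t + t) i j) * x j)"
      using that by (intro sum.cong) (simp_all add: graph_dist_K_pend)
    then show ?thesis using eigen that by simp
  qed
  from K_pend_square_eigenvector_zero[OF this K_pend_square_determinants[OF assms] \<open>k < t + t\<close>]
  show False using \<open>x k \<noteq> 0\<close> by simp
qed

lemma sum_list_take_mono:
  fixes ns :: "nat list"
  assumes "a \<le> b"
  shows "sum_list (take a ns) \<le> sum_list (take b ns)"
proof -
  obtain c where "b = a + c" using assms le_Suc_ex by blast
  then show ?thesis by (simp add: take_add)
qed

lemma in_block_unique: "in_block ns j v \<Longrightarrow> in_block ns j' v \<Longrightarrow> j = j'"
  unfolding in_block_def
  by (metis linorder_neqE_nat not_le order.strict_trans2 sum_list_take_mono Suc_leI)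

lemma in_block_less:
  assumes "in_block ns j v"
  shows "v < sum_list ns + 1"
proof -
  have "v - 1 < sum_list (take (Suc j) ns)" "1 \<le> v" "Suc j \<le> length ns"
    using assms by (auto simp: in_block_def)
  moreover have "sum_list (take (Suc j) ns) \<le> sum_list ns"
    using sum_list_take_mono[of "Suc j" "length ns" ns] by (simp add: \<open>Suc j \<le> length ns\<close>)
  ultimately show ?thesis by linarith
qed

lemma in_block_exists:
  assumes "1 \<le> v" "v < sum_list ns + 1"
  shows "\<exists>j. in_block ns j v"
proof -
  have "\<exists>j<length ns. sum_list (take j ns) \<le> x \<and> x < sum_list (take (Suc j) ns)"
    if "x < sum_list ns" for x and ns :: "nat list"
    using that
  proof (induction ns arbitrary: x)
    case (Cons a ns)
    show ?case
    proof (cases "x < a")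
      case False
      then have "x - a < sum_list ns" using Cons.prems by simp
      then obtain j where "j < length ns" "sum_list (take j ns) \<le> x - a" "x - a < sum_list (take (Suc j) ns)"
        using Cons.IH by blast
      then show ?thesis using False by (intro exI[of _ "Suc j"]) auto
    qed auto
  qed simp
  from this[of "v - 1" ns] show ?thesis using assms unfolding in_block_def by auto
qed

definition same_block :: "nat list \<Rightarrow> nat \<Rightarrow> nat \<Rightarrow> bool" where
  "same_block ns u v \<longleftrightarrow> (\<exists>j. in_block ns j u \<and> in_block ns j v)"

lemma same_block_iff_in_block: "in_block ns j v \<Longrightarrow> same_block ns u v \<longleftrightarrow> in_block ns j u"
  unfolding same_block_def using in_block_unique by blast

lemma same_block_sym: "same_block ns u v \<Longrightarrow> same_block ns v u"
  unfolding same_block_def by blast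

lemma same_block_refl: "1 \<le> v \<Longrightarrow> v < sum_list ns + 1 \<Longrightarrow> same_block ns v v"
  unfolding same_block_def using in_block_exists by blast

lemma same_block_range: "same_block ns u v \<Longrightarrow> 1 \<le> u \<and> u < sum_list ns + 1"
  unfolding same_block_def using in_block_less by (auto simp: in_block_def)

lemma K_cone_iff: "K_cone ns u v \<longleftrightarrow> u \<noteq> v \<and> (u = 0 \<or> v = 0 \<or> same_block ns u v)"
  unfolding K_cone_def same_block_def by auto

lemma graph_dist_K_cone:
  assumes "u < n" "v < n"
  shows "graph_dist (K_cone ns) n u v = (if u = v then 0 else if K_cone ns u v then 1 else 2)"
proof -
  have "graph_dist (K_cone ns) n u v = 2" if "u \<noteq> v" "\<not> K_cone ns u v"
    using assms that by (intro graph_dist_eq_2[where w = 0]) (auto simp: K_cone_def)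
  then show ?thesis using assms graph_dist_self graph_dist_adjacent by auto
qed

lemma K_cone_row_center:
  fixes x :: "nat \<Rightarrow> 'a::comm_ring_1"
  assumes "0 < n"
  shows "(\<Sum>j<n. of_nat (graph_dist (K_cone ns) n 0 j) * x j) = (\<Sum>j<n. x j) - x 0"
proof -
  have "(\<Sum>j<n. of_nat (graph_dist (K_cone ns) n 0 j) * x j) = (\<Sum>j<n. x j - (if j = 0 then x j else 0))"
    by (intro sum.cong) (auto simp: graph_dist_K_cone K_cone_def)
  then show ?thesis using assms by (simp add: sum_subtractf sum.delta)
qed

lemma K_cone_row_block:
  fixes x :: "nat \<Rightarrow> 'a::comm_ring_1"
  assumes n: "n = sum_list ns + 1" and i: "1 \<le> i" "i < n"
  shows "(\<Sum>j<n. of_nat (graph_dist (K_cone ns) n i j) * x j)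
    = 2 * (\<Sum>j<n. x j) - x 0 - (\<Sum>j\<in>{u. same_block ns u i}. x j) - x i"
proof -
  have "{u. same_block ns u i} = {j\<in>{..<n}. same_block ns j i}"
    using same_block_range n by auto
  then have block: "(\<Sum>j<n. if same_block ns j i then x j else 0) = (\<Sum>j\<in>{u. same_block ns u i}. x j)"
    using sum.inter_filter[of "{..<n}" x "\<lambda>j. same_block ns j i"] by simp
  have "(\<Sum>j<n. of_nat (graph_dist (K_cone ns) n i j) * x j)
      = (\<Sum>j<n. 2 * x j - (if j = 0 then x j else 0)
                 - (if same_block ns j i then x j else 0) - (if j = i then x j else 0))"
    using i n same_block_refl[of i ns] same_block_range[of ns _ i]
    by (intro sum.cong) (auto simp: graph_dist_K_cone K_cone_iff dest: same_block_sym)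
  then show ?thesis
    using i by (simp add: sum_subtractf sum_distrib_left sum.delta block)
qed

lemma same_block_class_eq:
  assumes "same_block ns u v"
  shows "{w. same_block ns w u} = {w. same_block ns w v}"
proof -
  obtain j where "in_block ns j u" "in_block ns j v" using assms unfolding same_block_def by blast
  then show ?thesis using same_block_iff_in_block by blast
qed

lemma K_cone_eigenvector_entry:
  fixes x :: "nat \<Rightarrow> 'a::field_char_0"
  assumes n: "n = sum_list ns + 1"
    and eigen: "\<And>i. i < n \<Longrightarrow> (\<Sum>j<n. of_nat (graph_dist (K_cone ns) n i j) * x j) = z * x i"
    and z: "z + 1 \<noteq> 0"
    and i: "1 \<le> i" "i < n"
  shows "(z + 1 + of_nat (card {u. same_block ns u i})) * x i = (1 + 2 * z) * x 0"
proof -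
  define S where "S = (\<Sum>j<n. x j)"
  define B where "B v = (\<Sum>j\<in>{u. same_block ns u v}. x j)" for v
  have center: "S = (z + 1) * x 0"
    using eigen[of 0] K_cone_row_center[of n ns x] n unfolding S_def by (simp add: algebra_simps)
  have vertex: "(z + 1) * x v = 2 * S - x 0 - B v" if "1 \<le> v" "v < n" for v
    using eigen[of v] K_cone_row_block[OF n that, of x] that unfolding S_def B_def
    by (simp add: algebra_simps)
  have "x u = x i" if "same_block ns u i" for u
  proof -
    have "1 \<le> u" "u < n" using same_block_range[OF that] n by auto
    moreover have "B u = B i" unfolding B_def using same_block_class_eq[OF that] by simp
    ultimately have "(z + 1) * x u = (z + 1) * x i" using vertex[of u] vertex[OF i] by simp
    then show ?thesis using z by simp
  qed
  then have "B i = of_nat (card {u. same_block ns u i}) * x i"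
    unfolding B_def by simp
  then show ?thesis using vertex[OF i] center by (simp add: algebra_simps)
qed

lemma K_cone_eigenvalue_equation:
  fixes x :: "nat \<Rightarrow> 'a::field_char_0"
  assumes n: "n = sum_list ns + 1"
    and nonzero: "\<exists>i<n. x i \<noteq> 0"
    and eigen: "\<And>i. i < n \<Longrightarrow> (\<Sum>j<n. of_nat (graph_dist (K_cone ns) n i j) * x j) = z * x i"
    and z: "\<And>k::nat. z + 1 + of_nat k \<noteq> 0"
  shows "z = (1 + 2 * z) * (\<Sum>v\<in>{1..<n}. 1 / (z + 1 + of_nat (card {u. same_block ns u v})))"
proof -
  have "z + 1 \<noteq> 0" using z[of 0] by simp
  then have entry: "x v = (1 + 2 * z) * x 0 / (z + 1 + of_nat (card {u. same_block ns u v}))"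
    if "1 \<le> v" "v < n" for v
    using K_cone_eigenvector_entry[OF n eigen _ that] z by (simp add: field_simps)
  have "x 0 \<noteq> 0"
    using nonzero entry by (metis div_0 less_one mult_zero_right not_less)
  have "z * x 0 = (\<Sum>j<n. x j) - x 0"
    using eigen[of 0] K_cone_row_center[of n ns x] n by simp
  also have "\<dots> = (\<Sum>v\<in>{1..<n}. x v)"
  proof -
    have "0 < n" using n by simp
    then show ?thesis by (simp add: lessThan_atLeast0 sum.atLeast_Suc_lessThan)
  qed
  also have "\<dots> = (1 + 2 * z) * (\<Sum>v\<in>{1..<n}. 1 / (z + 1 + of_nat (card {u. same_block ns u v}))) * x 0"
    using entry by (simp add: sum_distrib_left sum_distrib_right)
  finally show ?thesis using \<open>x 0 \<noteq> 0\<close> by simp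
qed

lemma same_block_twins_exist:
  assumes "2 \<le> length ns" "\<forall>i\<in>set ns. 1 \<le> i"
  obtains u v where "1 \<le> u" "u < v" "v < sum_list ns + 1"
    "\<And>w. w \<noteq> u \<Longrightarrow> w \<noteq> v \<Longrightarrow> same_block ns w u \<longleftrightarrow> same_block ns w v"
proof -
  obtain a b rest where ns: "ns = a # b # rest"
    using assms(1) by (metis Suc_le_length_iff numeral_2_eq_2)
  have "1 \<le> a" "1 \<le> b" using assms(2) ns by auto
  then consider "2 \<le> a" | "a = 1" "2 \<le> b" | "a = 1" "b = 1" by linarith
  then show thesis
  proof cases
    case 1
    then have "in_block ns 0 1" "in_block ns 0 2" unfolding ns in_block_def by auto
    then show thesis using that[of 1 2] ns 1 by (simp add: same_block_iff_in_block)
  next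
    case 2
    then have "in_block ns 1 2" "in_block ns 1 3" unfolding ns in_block_def by auto
    then show thesis using that[of 2 3] ns 2 by (simp add: same_block_iff_in_block)
  next
    case 3
    then have "in_block ns 0 w \<longleftrightarrow> w = 1" "in_block ns 1 w \<longleftrightarrow> w = 2" for w
      unfolding ns in_block_def by auto
    then have "same_block ns w 1 \<longleftrightarrow> w = 1" "same_block ns w 2 \<longleftrightarrow> w = 2" for w
      using same_block_iff_in_block[of ns 0 1 w] same_block_iff_in_block[of ns 1 2 w] by simp_all
    then show thesis using that[of 1 2] ns 3 by simp
  qed
qed

lemma K_cone_eigenvalue_minus_1_or_2:
  assumes n: "n = sum_list ns + 1" and "2 \<le> length ns" "\<forall>i\<in>set ns. 1 \<le> i"
  obtains z where "z = -1 \<or> z = -2" "0 < spectrum_mult (dist_matrix (K_cone ns) n) z"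
proof -
  obtain u v where uv: "1 \<le> u" "u < v" "v < n"
    and twins: "\<And>w. w \<noteq> u \<Longrightarrow> w \<noteq> v \<Longrightarrow> same_block ns w u \<longleftrightarrow> same_block ns w v"
    using same_block_twins_exist assms n by metis
  have "K_cone ns w u \<longleftrightarrow> K_cone ns w v" if "w \<noteq> u" "w \<noteq> v" for w
    using twins[OF that] that uv unfolding K_cone_iff by auto
  then have "0 < spectrum_mult (dist_matrix (K_cone ns) n) (- of_nat (graph_dist (K_cone ns) n u v))"
    using uv by (intro dist_matrix_twin_eigenvalue) (auto simp: graph_dist_K_cone K_cone_def)
  moreover have "graph_dist (K_cone ns) n u v \<in> {1, 2}"
    using uv by (auto simp: graph_dist_K_cone)
  ultimately show thesis by (auto intro: that)
qed

lemma secular_equation_root_unique: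
  fixes N :: "'a \<Rightarrow> real" and A :: "'a set"
  defines "F \<equiv> \<lambda>l. \<Sum>v\<in>A. 1 / (l + 1 + N v)"
  assumes "\<forall>v\<in>A. 0 \<le> N v"
    and "-1 < a" "a < -1/2" "a = (1 + 2 * a) * F a"
    and "-1 < b" "b < -1/2" "b = (1 + 2 * b) * F b"
  shows "a = b"
proof -
  have no_smaller_root: False
    if "-1 < a" "a < b" "b < -1/2" "a = (1 + 2 * a) * F a" "b = (1 + 2 * b) * F b" for a b
  proof -
    have "F b \<le> F a"
      unfolding F_def using assms(2) that(1,2)
      by (intro sum_mono divide_left_mono) (auto intro: mult_pos_pos)
    moreover have "F a = a / (1 + 2 * a)" "F b = b / (1 + 2 * b)"
      using that by (simp_all add: field_simps)
    moreover have "a / (1 + 2 * a) < b / (1 + 2 * b)"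
      using that by (simp add: divide_simps) (simp add: algebra_simps)
    ultimately show False by linarith
  qed
  show ?thesis
    using no_smaller_root[of a b] no_smaller_root[of b a] assms(3-8) by (cases a b rule: linorder_cases) auto
qed

lemma K_cone_real_eigenvalue_equation:
  assumes n: "n = sum_list ns + 1"
    and ev: "0 < spectrum_mult (dist_matrix (K_cone ns) n) (of_real l)" and "-1 < l"
  shows "l = (1 + 2 * l) * (\<Sum>v\<in>{1..<n}. 1 / (l + 1 + real (card {u. same_block ns u v})))"
proof -
  obtain x :: "nat \<Rightarrow> complex" where x: "\<exists>i<n. x i \<noteq> 0"
    "\<And>i. i < n \<Longrightarrow> (\<Sum>j<n. of_nat (graph_dist (K_cone ns) n i j) * x j) = of_real l * x i"
    using ev unfolding spectrum_mult_dist_matrix_pos_iff by blast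
  have "of_real l + 1 + of_nat k \<noteq> (0::complex)" for k
  proof -
    have "complex_of_real (l + 1 + real k) \<noteq> 0" using \<open>-1 < l\<close> by (simp only: of_real_eq_0_iff)
    then show ?thesis by simp
  qed
  then have "(of_real l :: complex) = (1 + 2 * of_real l) *
      (\<Sum>v\<in>{1..<n}. 1 / (of_real l + 1 + of_nat (card {u. same_block ns u v})))"
    using K_cone_eigenvalue_equation[OF n x] by blast
  also have "\<dots> = of_real ((1 + 2 * l) * (\<Sum>v\<in>{1..<n}. 1 / (l + 1 + real (card {u. same_block ns u v}))))"
    by simp
  finally show ?thesis by (simp only: of_real_eq_iff)
qed

lemma K_cone_unique_eigenvalue_between:
  assumes "n = sum_list ns + 1"
    and "-1 < a" "a < -1/2" "0 < spectrum_mult (dist_matrix (K_cone ns) n) (of_real a)"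
    and "-1 < b" "b < -1/2" "0 < spectrum_mult (dist_matrix (K_cone ns) n) (of_real b)"
  shows "a = b"
proof (rule secular_equation_root_unique[where A = "{1..<n}" and N = "\<lambda>v. real (card {u. same_block ns u v})"])
  show "a = (1 + 2 * a) * (\<Sum>v\<in>{1..<n}. 1 / (a + 1 + real (card {u. same_block ns u v})))"
    using assms(1,4,2) by (rule K_cone_real_eigenvalue_equation)
  show "b = (1 + 2 * b) * (\<Sum>v\<in>{1..<n}. 1 / (b + 1 + real (card {u. same_block ns u v})))"
    using assms(1,7,5) by (rule K_cone_real_eigenvalue_equation)
qed (use assms in auto)

lemma sqrt2_minus_2_bounds: "-3/5 < sqrt 2 - 2" "sqrt 2 - 2 < (-1/2 :: real)"
proof -
  have "sqrt (49/25) < sqrt (2::real)" "sqrt (2::real) < sqrt (9/4)"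
    by (simp_all only: real_sqrt_less_iff)
  moreover have "sqrt (49/25) = (7/5::real)" "sqrt (9/4) = (3/2::real)"
    by (rule real_sqrt_unique; simp add: power2_eq_square)+
  ultimately show "-3/5 < sqrt 2 - 2" "sqrt 2 - 2 < (-1/2 :: real)" by simp_all
qed

theorem theorem3p6:
  fixes s t n :: nat and ns :: "nat list"
  assumes "2 \<le> t" and "t \<le> s" and "s + t = n"
    and "length ns \<ge> 2" and "\<forall>i \<in> set ns. i \<ge> 1" and "sum_list ns + 1 = n"
  shows "\<not> D_cospectral (K_pend s t) n (K_cone ns) n"
proof
  assume "D_cospectral (K_pend s t) n (K_cone ns) n"
  then have same_spectrum:
      "spectrum_mult (dist_matrix (K_pend s t) (s + t)) = spectrum_mult (dist_matrix (K_cone ns) n)"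
    using assms(3) by (simp add: D_cospectral_def)
  have n: "n = sum_list ns + 1" using assms(6) by simp
  show False
  proof (cases "t < s")
    case True
    obtain mu where "-1 < mu" "mu < -3/5" "0 < spectrum_mult (dist_matrix (K_pend s t) (s + t)) (of_real mu)"
      using K_pend_eigenvalue_between[of t s] assms(1) True by auto
    moreover have "0 < spectrum_mult (dist_matrix (K_pend s t) (s + t)) (of_real (sqrt 2 - 2))"
      using K_pend_eigenvalue_sqrt2 assms(1,2) .
    ultimately have "mu = sqrt 2 - 2"
      using sqrt2_minus_2_bounds same_spectrum
      by (intro K_cone_unique_eigenvalue_between[OF n]) auto
    with \<open>mu < -3/5\<close> show False using sqrt2_minus_2_bounds by simp
  next
    case False
    obtain z where "z = -1 \<or> z = -2" "0 < spectrum_mult (dist_matrix (K_cone ns) n) z"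
      using K_cone_eigenvalue_minus_1_or_2[OF n assms(4,5)] .
    then show False
      using K_pend_square_no_eigenvalue[OF assms(1)] same_spectrum False assms(2) by auto
  qed
qed

end
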